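(* Let $\kappa=1$ and, for $h>0$, let $\sigma(h)\in(0,1)$ be the unique value such that $$A(\lambda)=\frac{e^{-i\pi/4}\sqrt2\,\Gamma(\frac34-\frac12 i\lambda)}{\Gamma(\frac14-\frac12 i\lambda)},\qquad \lambda=-h^{-1}-i\sigma(h),$$ is real and positive. Then as $h\to0^+$, $$\sigma(h)=2e^{-\pi/h}h^{-1}(1+O(h)),$$ and as $h\to+\infty$, $$\sigma(h)=\tfrac12-h^{-1}+O(h^{-2}).$$
   Context: The existence and uniqueness of $\sigma(h)\in(0,1)$ with $A(\lambda)$ real and positive, for each $h>0$ when $\kappa=1$, is part of the setting (it is guaranteed by a separate result). *)

theory Defs
  imports "HOL-Analysis.Analysis" "HOL-Library.Landau_Symbols"
begin

definition A_fun :: "complex \<Rightarrow> complex" where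
  "A_fun lam = exp (- \<i> * complex_of_real pi / 4) * complex_of_real (sqrt 2)
     * Gamma (3/4 - \<i> * lam / 2) / Gamma (1/4 - \<i> * lam / 2)"

definition real_pos :: "complex \<Rightarrow> bool" where
  "real_pos z \<longleftrightarrow> Im z = 0 \<and> Re z > 0"

end

theory Submission
  imports Defs
begin

text \<open>Put \<open>s = \<sigma>/2\<close> and \<open>t = 1/(2h)\<close>, so that \<open>\<lambda> = -1/h - i \<sigma>\<close> gives the Gamma arguments
  \<open>3/4 - s + i t\<close> and \<open>1/4 - s + i t\<close>. The reflection formula writes \<open>A(\<lambda>)\<close> as a positive
  multiple of \<open>exp (-i (\<pi>/4 + \<theta>)) sin (\<pi> (1/4 - s + i t))\<close>, where \<open>\<theta>\<close> is the difference of
  \<open>Im ln \<Gamma>\<close> at \<open>3/4 \<plusminus> s + i t\<close>; positivity of \<open>A(\<lambda>)\<close> is then the phase equation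
  \<open>sin (\<pi> s - \<theta>) = exp (-2\<pi> t) cos (\<pi> s + \<theta>)\<close>.
  Since \<open>\<partial>\<^sub>x Im ln \<Gamma>(x + i t) = Im \<psi>(x + i t) = \<Sum>\<^sub>k t / ((x + k)\<^sup>2 + t\<^sup>2)\<close>, the phase \<open>\<theta>\<close> is
  \<open>O(t)\<close> for small \<open>t\<close>, while comparing the series with the midpoint rule for
  \<open>\<integral> t / (u\<^sup>2 + t\<^sup>2) du\<close> gives \<open>\<theta> = \<pi> s - s/(2t) + O(s/t\<^sup>2)\<close> for large \<open>t\<close>. Solving the phase
  equation yields \<open>s \<approx> t exp (-2\<pi> t)\<close> as \<open>t \<rightarrow> \<infinity>\<close> and \<open>s \<approx> 1/4 - t\<close> as \<open>t \<rightarrow> 0\<close>.\<close>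

lemma abs_sin_diff_le: "\<bar>sin x - sin y\<bar> \<le> \<bar>x - y\<bar>" for x y :: real
proof -
  have "\<bar>sin x - sin y\<bar> = 2 * \<bar>sin ((x - y) / 2)\<bar> * \<bar>cos ((x + y) / 2)\<bar>"
    by (simp add: sin_diff_sin abs_mult)
  also have "\<dots> \<le> 2 * \<bar>(x - y) / 2\<bar> * 1" by (intro mult_mono abs_sin_x_le_abs_x) auto
  finally show ?thesis by simp
qed

lemma abs_cos_diff_le: "\<bar>cos x - cos y\<bar> \<le> \<bar>x - y\<bar>" for x y :: real
proof -
  have "\<bar>cos x - cos y\<bar> = 2 * \<bar>sin ((x + y) / 2)\<bar> * \<bar>sin ((y - x) / 2)\<bar>"
    by (simp add: cos_diff_cos abs_mult)
  also have "\<dots> \<le> 2 * 1 * \<bar>(y - x) / 2\<bar>" by (intro mult_mono abs_sin_x_le_abs_x) auto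
  finally show ?thesis by simp
qed

lemma abs_sin_minus_self_le: "\<bar>sin x - x\<bar> \<le> \<bar>x\<bar> ^ 3 / 6" for x :: real
  using Maclaurin_sin_bound[of x 3] by (simp add: eval_nat_numeral sin_coeff_def fact_numeral)

lemma abs_cos_minus_one_le: "\<bar>cos x - 1\<bar> \<le> x\<^sup>2 / 2" for x :: real
proof -
  have "(sin (x / 2))\<^sup>2 \<le> (x / 2)\<^sup>2"
    using abs_sin_x_le_abs_x[of "x / 2"] by (metis abs_ge_zero power2_abs power_mono)
  then show ?thesis using cos_double_sin[of "x / 2"] by (simp add: power_divide)
qed

lemma abs_arctan_minus_self_le:
  assumes "\<bar>y\<bar> < 1"
  shows "\<bar>arctan y - y\<bar> \<le> \<bar>y\<bar> ^ 3"
proof -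
  have nonneg: "\<bar>arctan y - y\<bar> \<le> y ^ 3" if "0 \<le> y" "y < 1" for y :: real
  proof -
    have "(\<Sum>k<2 * 1. (- 1) ^ k * (1 / real (k * 2 + 1) * y ^ (k * 2 + 1))) \<le> arctan y"
      using that by (rule arctan_lower_bound)
    then have "y - y ^ 3 / 3 \<le> arctan y" by (simp add: eval_nat_numeral)
    moreover have "arctan y \<le> y" using that(1) by (rule arctan_le_self)
    ultimately show ?thesis using that by (simp add: abs_le_iff)
  qed
  show ?thesis
  proof (cases "y \<ge> 0")
    case True
    then show ?thesis using nonneg[of y] assms by simp
  next
    case False
    then show ?thesis using nonneg[of "- y"] assms by (simp add: arctan_minus abs_minus_commute)
  qed
qed

lemma exp_neg_le_quadratic:
  fixes x :: real
  assumes "x \<ge> 0"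
  shows "exp (- x) \<le> 1 - x + x\<^sup>2 / 2"
proof -
  define f where "f y = 1 - y + y\<^sup>2 / 2 - exp (- y)" for y :: real
  have "f 0 \<le> f x"
  proof (rule DERIV_nonneg_imp_nondecreasing[OF assms])
    fix y :: real
    have "(f has_real_derivative - 1 + y + exp (- y)) (at y)"
      unfolding f_def by (auto intro!: derivative_eq_intros)
    moreover have "- 1 + y + exp (- y) \<ge> 0" using exp_ge_add_one_self[of "- y"] by simp
    ultimately show "\<exists>d. (f has_real_derivative d) (at y) \<and> d \<ge> 0" by blast
  qed
  then show ?thesis by (simp add: f_def)
qed

lemma one_minus_exp_neg_bounds:
  fixes x :: real
  assumes "x \<ge> 0"
  shows "0 \<le> 1 - exp (- x)" and "1 - exp (- x) \<le> x" and "\<bar>1 - exp (- x) - x\<bar> \<le> x\<^sup>2 / 2"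
  using assms exp_ge_add_one_self[of "- x"] exp_neg_le_quadratic[OF assms] by (auto simp: abs_le_iff)

lemma one_minus_exp_neg_two_pi_bounds:
  fixes t :: real
  assumes "0 < t"
  shows "0 \<le> 1 - exp (- (2 * pi * t))" and "1 - exp (- (2 * pi * t)) \<le> 8 * t"
    and "\<bar>1 - exp (- (2 * pi * t)) - 2 * pi * t\<bar> \<le> 32 * t\<^sup>2"
proof -
  have nonneg: "0 \<le> 2 * pi * t" using assms by simp
  have "pi * t \<le> 4 * t" using assms pi_less_4 by (intro mult_right_mono) auto
  then show "0 \<le> 1 - exp (- (2 * pi * t))" and "1 - exp (- (2 * pi * t)) \<le> 8 * t"
    using one_minus_exp_neg_bounds(1,2)[OF nonneg] by linarith+
  have "pi\<^sup>2 * t\<^sup>2 \<le> 4\<^sup>2 * t\<^sup>2" using pi_less_4 by (intro mult_right_mono power_mono) auto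
  moreover have "(2 * pi * t)\<^sup>2 / 2 = 2 * (pi\<^sup>2 * t\<^sup>2)" by (simp add: power_mult_distrib)
  ultimately show "\<bar>1 - exp (- (2 * pi * t)) - 2 * pi * t\<bar> \<le> 32 * t\<^sup>2"
    using one_minus_exp_neg_bounds(3)[OF nonneg] by simp
qed

lemma square_mult_exp_neg_le: "t\<^sup>2 * exp (- 2 * pi * t) \<le> 1" if "t \<ge> 0" for t :: real
proof -
  have "1 \<le> pi\<^sup>2" using pi_gt3 by (intro one_le_power) simp
  then have "1 * t\<^sup>2 \<le> (2 * pi\<^sup>2) * t\<^sup>2" by (intro mult_right_mono) auto
  also have "\<dots> = (2 * pi * t)\<^sup>2 / 2" by (simp add: power_mult_distrib)
  also have "\<dots> \<le> exp (2 * pi * t)"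
  proof -
    have "0 \<le> 2 * pi * t" using that by simp
    then show ?thesis using exp_lower_Taylor_quadratic[of "2 * pi * t"] by linarith
  qed
  finally have "t\<^sup>2 \<le> exp (2 * pi * t)" by simp
  then show ?thesis by (simp add: exp_minus field_simps)
qed

lemma sums_relative_perturbation:
  fixes f T :: "nat \<Rightarrow> real"
  assumes T: "T sums L" and f: "\<And>n. \<bar>f n - T n\<bar> \<le> c * T n"
  shows "summable f" and "\<bar>suminf f - L\<bar> \<le> c * L"
proof -
  have cT: "(\<lambda>n. c * T n) sums (c * L)" using T by (rule sums_mult)
  have abs_err: "summable (\<lambda>n. \<bar>f n - T n\<bar>)"
    using f by (intro summable_comparison_test[OF _ sums_summable[OF cT]]) auto
  then have err: "summable (\<lambda>n. f n - T n)" by (rule summable_rabs_cancel)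
  have "f = (\<lambda>n. T n + (f n - T n))" by simp
  then have f_sums: "f sums (L + (\<Sum>n. f n - T n))"
    using sums_add[OF T summable_sums[OF err]] by simp
  then show "summable f" by (rule sums_summable)
  have "\<bar>\<Sum>n. f n - T n\<bar> \<le> (\<Sum>n. \<bar>f n - T n\<bar>)" using abs_err by (rule summable_rabs)
  also have "\<dots> \<le> (\<Sum>n. c * T n)"
    by (intro suminf_le f abs_err sums_summable[OF cT])
  also have "\<dots> = c * L" using cT by (rule sums_unique[symmetric])
  finally show "\<bar>suminf f - L\<bar> \<le> c * L" using f_sums by (simp add: sums_iff)
qed

section \<open>The Poisson kernel series\<close>

definition poisson_kernel :: "real \<Rightarrow> real \<Rightarrow> real" where
  "poisson_kernel t u = t / (u\<^sup>2 + t\<^sup>2)"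

lemma poisson_kernel_pos: "t > 0 \<Longrightarrow> poisson_kernel t u > 0"
  unfolding poisson_kernel_def by (simp add: add_nonneg_pos)

lemma has_real_derivative_arctan_div:
  assumes "t \<noteq> 0"
  shows "((\<lambda>u. arctan (u / t)) has_real_derivative poisson_kernel t u) (at u)"
proof -
  have "((\<lambda>u. arctan (u / t)) has_real_derivative 1 / (1 + (u / t)\<^sup>2) * (1 / t)) (at u)"
    using assms by (auto intro!: derivative_eq_intros simp: divide_simps)
  also have "1 / (1 + (u / t)\<^sup>2) * (1 / t) = poisson_kernel t u"
    using assms by (simp add: poisson_kernel_def field_simps power2_eq_square)
  finally show ?thesis .
qed

lemma has_real_derivative_poisson_kernel:
  assumes "t \<noteq> 0"
  shows "(poisson_kernel t has_real_derivative - 2 * t * u / (u\<^sup>2 + t\<^sup>2)\<^sup>2) (at u)"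
proof -
  have "u\<^sup>2 + t\<^sup>2 \<noteq> 0" using assms by (simp add: add_nonneg_pos)
  then show ?thesis unfolding poisson_kernel_def [abs_def]
    by (auto intro!: derivative_eq_intros simp: field_simps power2_eq_square)
qed

lemma has_real_derivative_poisson_kernel_deriv:
  assumes "t \<noteq> 0"
  shows "((\<lambda>u. - 2 * t * u / (u\<^sup>2 + t\<^sup>2)\<^sup>2) has_real_derivative
           t * (6 * u\<^sup>2 - 2 * t\<^sup>2) / (u\<^sup>2 + t\<^sup>2) ^ 3) (at u)"
proof -
  have nz: "u\<^sup>2 + t\<^sup>2 \<noteq> 0" using assms by (simp add: add_nonneg_pos)
  have "((\<lambda>u. - 2 * t * u / (u\<^sup>2 + t\<^sup>2)\<^sup>2) has_real_derivative
      ((- 2 * t) * (u\<^sup>2 + t\<^sup>2)\<^sup>2 - (- 2 * t * u) * (2 * (u\<^sup>2 + t\<^sup>2) * (2 * u)))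
        / ((u\<^sup>2 + t\<^sup>2)\<^sup>2)\<^sup>2) (at u)"
    using nz by (intro derivative_eq_intros refl) (auto simp: divide_simps)
  also have "((- 2 * t) * (u\<^sup>2 + t\<^sup>2)\<^sup>2 - (- 2 * t * u) * (2 * (u\<^sup>2 + t\<^sup>2) * (2 * u)))
        / ((u\<^sup>2 + t\<^sup>2)\<^sup>2)\<^sup>2 = t * (6 * u\<^sup>2 - 2 * t\<^sup>2) / (u\<^sup>2 + t\<^sup>2) ^ 3"
    using nz by (simp add: divide_simps) algebra
  finally show ?thesis .
qed

lemma arctan_midpoint_taylor:
  assumes "t \<noteq> 0"
  obtains \<xi>\<^sub>1 \<xi>\<^sub>2 where "u < \<xi>\<^sub>1" "\<xi>\<^sub>1 < u + 1/2" "u - 1/2 < \<xi>\<^sub>2" "\<xi>\<^sub>2 < u"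
    "arctan ((u + 1/2) / t) - arctan ((u - 1/2) / t) = poisson_kernel t u +
       (t * (6 * \<xi>\<^sub>1\<^sup>2 - 2 * t\<^sup>2) / (\<xi>\<^sub>1\<^sup>2 + t\<^sup>2) ^ 3
        + t * (6 * \<xi>\<^sub>2\<^sup>2 - 2 * t\<^sup>2) / (\<xi>\<^sub>2\<^sup>2 + t\<^sup>2) ^ 3) / 48"
proof -
  define f where "f m = [\<lambda>u. arctan (u / t), poisson_kernel t,
    \<lambda>u. - 2 * t * u / (u\<^sup>2 + t\<^sup>2)\<^sup>2, \<lambda>u. t * (6 * u\<^sup>2 - 2 * t\<^sup>2) / (u\<^sup>2 + t\<^sup>2) ^ 3] ! m" for m
  have f0: "f 0 = (\<lambda>u. arctan (u / t))" by (simp add: f_def)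
  have df: "\<forall>m x. m < 3 \<and> a \<le> x \<and> x \<le> b \<longrightarrow> (f m has_real_derivative f (Suc m) x) (at x)"
    for a b :: real
    using has_real_derivative_arctan_div[OF assms] has_real_derivative_poisson_kernel[OF assms]
      has_real_derivative_poisson_kernel_deriv[OF assms]
    by (auto simp: f_def less_Suc_eq numeral_3_eq_3)
  obtain \<xi>\<^sub>1 where \<xi>\<^sub>1: "u < \<xi>\<^sub>1" "\<xi>\<^sub>1 < u + 1/2" "arctan ((u + 1/2) / t) =
      (\<Sum>m<3. f m u / fact m * (u + 1/2 - u) ^ m) + f 3 \<xi>\<^sub>1 / fact 3 * (u + 1/2 - u) ^ 3"
    using Taylor_up[of 3 f _ u "u + 1/2" u, OF _ f0 df] by auto
  obtain \<xi>\<^sub>2 where \<xi>\<^sub>2: "u - 1/2 < \<xi>\<^sub>2" "\<xi>\<^sub>2 < u" "arctan ((u - 1/2) / t) =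
      (\<Sum>m<3. f m u / fact m * (u - 1/2 - u) ^ m) + f 3 \<xi>\<^sub>2 / fact 3 * (u - 1/2 - u) ^ 3"
    using Taylor_down[of 3 f _ "u - 1/2" u u, OF _ f0 df] by auto
  show thesis
    using that[OF \<xi>\<^sub>1(1,2) \<xi>\<^sub>2(1,2)] \<xi>\<^sub>1(3) \<xi>\<^sub>2(3)
    by (simp add: f_def eval_nat_numeral fact_numeral power_numeral)
qed

lemma abs_poisson_kernel_deriv2_le:
  assumes t: "t > 0"
  shows "\<bar>t * (6 * x\<^sup>2 - 2 * t\<^sup>2) / (x\<^sup>2 + t\<^sup>2) ^ 3\<bar> \<le> 6 * poisson_kernel t x / t\<^sup>2"
proof -
  define D where "D = x\<^sup>2 + t\<^sup>2"
  have D: "t\<^sup>2 \<le> D" "0 < D" using t by (auto simp: D_def add_nonneg_pos)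
  have "\<bar>6 * x\<^sup>2 - 2 * t\<^sup>2\<bar> \<le> 6 * D" unfolding D_def by (simp add: abs_le_iff)
  then have "\<bar>t * (6 * x\<^sup>2 - 2 * t\<^sup>2)\<bar> \<le> t * (6 * D)"
    using t by (simp add: abs_mult mult_left_mono)
  then have "\<bar>t * (6 * x\<^sup>2 - 2 * t\<^sup>2) / D ^ 3\<bar> \<le> 6 * t / (D * D)"
    using D by (simp add: abs_divide divide_simps power3_eq_cube)
  also have "\<dots> \<le> 6 * t / (D * t\<^sup>2)"
    using D t by (intro divide_left_mono mult_left_mono) auto
  finally show ?thesis by (simp add: poisson_kernel_def D_def)
qed

lemma poisson_kernel_le_shift:
  assumes t: "t \<ge> 1" and "\<bar>x - y\<bar> \<le> 1"
  shows "poisson_kernel t x \<le> 3 * poisson_kernel t y"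
proof -
  have "\<bar>y\<bar> \<le> \<bar>x\<bar> + 1" using assms by linarith
  then have "y\<^sup>2 \<le> (\<bar>x\<bar> + 1)\<^sup>2" by (metis abs_ge_zero power2_abs power_mono)
  also have "\<dots> = 2 * x\<^sup>2 + 2 - (\<bar>x\<bar> - 1)\<^sup>2" by (simp add: power2_eq_square algebra_simps)
  also have "\<dots> \<le> 2 * x\<^sup>2 + 2" by simp
  finally have "y\<^sup>2 + t\<^sup>2 \<le> 3 * (x\<^sup>2 + t\<^sup>2)"
    using one_le_power[OF t, of 2] zero_le_power2[of x] unfolding distrib_left by linarith
  moreover have "0 < x\<^sup>2 + t\<^sup>2" "0 < y\<^sup>2 + t\<^sup>2" using t by (auto simp: add_nonneg_pos)
  ultimately show ?thesis using t unfolding poisson_kernel_def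
    by (simp add: divide_simps mult_left_mono)
qed

lemma arctan_increment_midpoint_error:
  fixes t u :: real
  assumes t: "t \<ge> 1"
  defines "\<Delta> \<equiv> arctan ((u + 1/2) / t) - arctan ((u - 1/2) / t)"
  shows "\<bar>\<Delta> - poisson_kernel t u\<bar> \<le> 3 / (4 * t\<^sup>2) * \<Delta>"
proof -
  obtain \<xi>\<^sub>1 \<xi>\<^sub>2 where \<xi>: "u < \<xi>\<^sub>1" "\<xi>\<^sub>1 < u + 1/2" "u - 1/2 < \<xi>\<^sub>2" "\<xi>\<^sub>2 < u"
    "\<Delta> = poisson_kernel t u + (t * (6 * \<xi>\<^sub>1\<^sup>2 - 2 * t\<^sup>2) / (\<xi>\<^sub>1\<^sup>2 + t\<^sup>2) ^ 3
        + t * (6 * \<xi>\<^sub>2\<^sup>2 - 2 * t\<^sup>2) / (\<xi>\<^sub>2\<^sup>2 + t\<^sup>2) ^ 3) / 48"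
    using arctan_midpoint_taylor[of t u] t unfolding \<Delta>_def by auto
  obtain \<eta> where \<eta>: "u - 1/2 < \<eta>" "\<eta> < u + 1/2" "\<Delta> = poisson_kernel t \<eta>"
    using MVT2[of "u - 1/2" "u + 1/2" "\<lambda>u. arctan (u / t)" "poisson_kernel t"]
      has_real_derivative_arctan_div t unfolding \<Delta>_def by fastforce
  have "poisson_kernel t \<xi> \<le> 3 * \<Delta>" if "\<bar>\<xi> - \<eta>\<bar> \<le> 1" for \<xi>
    using poisson_kernel_le_shift[OF t that] \<eta>(3) by simp
  then have "poisson_kernel t \<xi>\<^sub>1 \<le> 3 * \<Delta>" "poisson_kernel t \<xi>\<^sub>2 \<le> 3 * \<Delta>"
    using \<xi>(1-4) \<eta>(1,2) by simp_all
  moreover obtain d\<^sub>1 d\<^sub>2 where d: "\<Delta> = poisson_kernel t u + (d\<^sub>1 + d\<^sub>2) / 48"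
    "\<bar>d\<^sub>1\<bar> \<le> 6 * poisson_kernel t \<xi>\<^sub>1 / t\<^sup>2" "\<bar>d\<^sub>2\<bar> \<le> 6 * poisson_kernel t \<xi>\<^sub>2 / t\<^sup>2"
    using t by (intro that[OF \<xi>(5)] abs_poisson_kernel_deriv2_le) auto
  ultimately have "\<bar>d\<^sub>1\<bar> \<le> 6 * (3 * \<Delta>) / t\<^sup>2" "\<bar>d\<^sub>2\<bar> \<le> 6 * (3 * \<Delta>) / t\<^sup>2"
    by (smt (verit) divide_right_mono zero_le_power2)+
  moreover have "\<bar>\<Delta> - poisson_kernel t u\<bar> \<le> (\<bar>d\<^sub>1\<bar> + \<bar>d\<^sub>2\<bar>) / 48"
    using d(1) abs_triangle_ineq[of d\<^sub>1 d\<^sub>2] by simp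
  ultimately show ?thesis by simp
qed

lemma poisson_kernel_series_approx:
  assumes t: "t \<ge> 1"
  shows "summable (\<lambda>k. poisson_kernel t (x + real k))"
    and "\<bar>(\<Sum>k. poisson_kernel t (x + real k)) - (pi / 2 - arctan ((x - 1/2) / t))\<bar>
           \<le> 3 * pi / (4 * t\<^sup>2)"
proof -
  define g where "g n = arctan ((x + real n - 1/2) / t)" for n
  have "filterlim (\<lambda>n. (x - 1/2) / t + real n * (1 / t)) at_top sequentially"
    using t by (intro filterlim_tendsto_add_at_top[OF tendsto_const]
        filterlim_at_top_mult_tendsto_pos[OF tendsto_const] filterlim_real_sequentially) auto
  then have "g \<longlonglongrightarrow> pi / 2"
    unfolding g_def using t by (intro filterlim_compose[OF tendsto_arctan_at_top]) (simp add: diff_divide_distrib add_divide_distrib algebra_simps)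
  then have T: "(\<lambda>n. g (Suc n) - g n) sums (pi / 2 - g 0)" by (rule telescope_sums)
  have err: "\<bar>poisson_kernel t (x + real n) - (g (Suc n) - g n)\<bar> \<le> 3 / (4 * t\<^sup>2) * (g (Suc n) - g n)" for n
    using arctan_increment_midpoint_error[OF t, of "x + real n"]
    by (simp add: g_def abs_minus_commute algebra_simps)
  show "summable (\<lambda>k. poisson_kernel t (x + real k))"
    using sums_relative_perturbation(1)[OF T err] .
  have "\<bar>(\<Sum>k. poisson_kernel t (x + real k)) - (pi / 2 - g 0)\<bar> \<le> 3 / (4 * t\<^sup>2) * (pi / 2 - g 0)"
    using sums_relative_perturbation(2)[OF T err] .
  also have "\<dots> \<le> 3 / (4 * t\<^sup>2) * pi"
    using arctan_lbound[of "(x - 1/2) / t"] by (intro mult_left_mono) (auto simp: g_def)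
  finally show "\<bar>(\<Sum>k. poisson_kernel t (x + real k)) - (pi / 2 - arctan ((x - 1/2) / t))\<bar>
      \<le> 3 * pi / (4 * t\<^sup>2)" by (simp add: g_def)
qed

lemma poisson_kernel_series_linear_approx:
  assumes t: "t \<ge> 1" and x: "1/4 \<le> x" "x \<le> 5/4"
  shows "\<bar>(\<Sum>k. poisson_kernel t (x + real k)) - (pi / 2 - (x - 1/2) / t)\<bar> \<le> 4 / t\<^sup>2"
proof -
  have "\<bar>x - 1/2\<bar> \<le> 3 / 4" using x unfolding abs_le_iff by linarith
  then have "\<bar>x - 1/2\<bar> / t \<le> 3 / 4 / t" using t by (intro divide_right_mono) auto
  then have y: "\<bar>(x - 1/2) / t\<bar> \<le> 3 / 4 / t" using t by (simp add: abs_divide)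
  also have "\<dots> < 1" using t by simp
  finally have "\<bar>arctan ((x - 1/2) / t) - (x - 1/2) / t\<bar> \<le> \<bar>(x - 1/2) / t\<bar> ^ 3"
    by (rule abs_arctan_minus_self_le)
  also have "\<dots> \<le> (3 / 4 / t) ^ 3" using y by (intro power_mono) auto
  also have "\<dots> \<le> 1 / t\<^sup>2"
  proof -
    have "27 * t\<^sup>2 \<le> 64 * t ^ 3"
      using t power_increasing[of 2 3 t] zero_le_power2[of t] by linarith
    then show ?thesis using t by (simp add: power_divide divide_simps)
  qed
  finally have "\<bar>arctan ((x - 1/2) / t) - (x - 1/2) / t\<bar> \<le> 1 / t\<^sup>2" .
  moreover have "3 * pi / (4 * t\<^sup>2) \<le> 3 / t\<^sup>2"
    using pi_less_4 t by (simp add: divide_simps)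
  ultimately show ?thesis using poisson_kernel_series_approx(2)[OF t, of x] by linarith
qed

lemma poisson_kernel_series_bound:
  assumes t: "t > 0" and x: "x \<ge> 1/4"
  shows "summable (\<lambda>k. poisson_kernel t (x + real k))"
    and "0 \<le> (\<Sum>k. poisson_kernel t (x + real k))"
    and "(\<Sum>k. poisson_kernel t (x + real k)) \<le> 8 / 3 * pi\<^sup>2 * t"
proof -
  have bound: "poisson_kernel t (x + real k) \<le> 16 * t * (1 / (real k + 1)\<^sup>2)" for k
  proof -
    have "(real k + 1)\<^sup>2 \<le> (4 * (x + real k))\<^sup>2" using x by (intro power_mono) auto
    also have "\<dots> = 16 * (x + real k)\<^sup>2" by (simp only: power_mult_distrib) simp
    finally have "(real k + 1)\<^sup>2 \<le> 16 * (x + real k)\<^sup>2" .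
    then have "t / (x + real k)\<^sup>2 \<le> 16 * t / (real k + 1)\<^sup>2"
      using t x by (simp add: divide_simps mult_left_mono)
    moreover have "0 < x + real k" using x by linarith
    then have "poisson_kernel t (x + real k) \<le> t / (x + real k)\<^sup>2"
      unfolding poisson_kernel_def using t by (intro divide_left_mono) (auto intro!: mult_pos_pos add_pos_pos)
    ultimately show ?thesis by simp
  qed
  have nonneg: "0 \<le> poisson_kernel t (x + real k)" for k
    using poisson_kernel_pos[OF t] less_imp_le by blast
  have sq: "(\<lambda>k. 16 * t * (1 / (real k + 1)\<^sup>2)) sums (16 * t * (pi\<^sup>2 / 6))"
    using sums_mult[OF inverse_squares_sums, of "16 * t"] by (simp add: add.commute)
  show sm: "summable (\<lambda>k. poisson_kernel t (x + real k))"
    using nonneg bound by (intro summable_comparison_test[OF _ sums_summable[OF sq]]) auto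
  show "0 \<le> (\<Sum>k. poisson_kernel t (x + real k))" using sm nonneg by (rule suminf_nonneg)
  have "(\<Sum>k. poisson_kernel t (x + real k)) \<le> 16 * t * (pi\<^sup>2 / 6)"
    using sums_le[OF bound summable_sums[OF sm] sq] .
  then show "(\<Sum>k. poisson_kernel t (x + real k)) \<le> 8 / 3 * pi\<^sup>2 * t" by (simp add: mult_ac)
qed

lemma Im_Digamma_eq_poisson_kernel_series:
  assumes t: "t \<noteq> 0"
  shows "Im (Digamma (Complex x t)) = (\<Sum>k. poisson_kernel t (x + real k))"
proof -
  have "Complex x t \<noteq> 0" using t by (simp add: complex_eq_iff)
  then have sm: "summable (\<lambda>n. inverse (of_nat (Suc n)) - inverse (Complex x t + of_nat n))"
    by (rule summable_Digamma)
  have "Im (euler_mascheroni :: complex) = 0"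
    by (metis Im_complex_of_real of_real_euler_mascheroni)
  then have "Im (Digamma (Complex x t))
      = Im (\<Sum>n. inverse (of_nat (Suc n)) - inverse (Complex x t + of_nat n))"
    by (simp add: Digamma_def)
  also have "\<dots> = (\<Sum>n. Im (inverse (of_nat (Suc n)) - inverse (Complex x t + of_nat n)))"
    by (rule Im_suminf[OF sm])
  also have "\<dots> = (\<Sum>k. poisson_kernel t (x + real k))"
    by (simp add: poisson_kernel_def add_ac)
  finally show ?thesis .
qed

lemma has_real_derivative_Im_ln_Gamma:
  assumes t: "t \<noteq> 0"
  shows "((\<lambda>x. Im (ln_Gamma (Complex x t))) has_real_derivative
           (\<Sum>k. poisson_kernel t (x + real k))) (at x)"
proof -
  have "((\<lambda>x. of_real x + \<i> * of_real t) has_vector_derivative (1::complex)) (at x)"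
    by (auto intro!: derivative_eq_intros)
  moreover have "(\<lambda>x. of_real x + \<i> * of_real t) = (\<lambda>x. Complex x t)"
    by (auto simp: complex_eq_iff)
  ultimately have line: "((\<lambda>x. Complex x t) has_vector_derivative 1) (at x)" by simp
  have "(ln_Gamma has_field_derivative Digamma (Complex x t)) (at (Complex x t))"
    using t by (intro has_field_derivative_ln_Gamma_complex) (simp add: complex_nonpos_Reals_iff)
  from field_vector_diff_chain_at[OF line this] show ?thesis
    using has_field_derivative_Im Im_Digamma_eq_poisson_kernel_series[OF t]
    by (fastforce simp: o_def)
qed

section \<open>The phase equation\<close>

definition phase_diff :: "real \<Rightarrow> real \<Rightarrow> real" where
  "phase_diff s t = Im (ln_Gamma (Complex (3/4 + s) t)) - Im (ln_Gamma (Complex (3/4 - s) t))"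

lemma phase_diff_mvt:
  assumes "t \<noteq> 0" "s > 0"
  obtains \<xi> where "3/4 - s < \<xi>" "\<xi> < 3/4 + s"
    "phase_diff s t = 2 * s * (\<Sum>k. poisson_kernel t (\<xi> + real k))"
  using MVT2[of "3/4 - s" "3/4 + s" "\<lambda>x. Im (ln_Gamma (Complex x t))"
      "\<lambda>x. \<Sum>k. poisson_kernel t (x + real k)"] has_real_derivative_Im_ln_Gamma assms
  by (fastforce simp: phase_diff_def)

lemma abs_phase_diff_le:
  assumes t: "t > 0" and s: "0 < s" "s \<le> 1/2"
  shows "\<bar>phase_diff s t\<bar> \<le> 8 / 3 * pi\<^sup>2 * t"
proof -
  obtain \<xi> where \<xi>: "3/4 - s < \<xi>" "phase_diff s t = 2 * s * (\<Sum>k. poisson_kernel t (\<xi> + real k))"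
    using phase_diff_mvt t s by (metis less_irrefl)
  have "1/4 \<le> \<xi>" using \<xi> s by linarith
  note S = poisson_kernel_series_bound(2,3)[OF t this]
  have "\<bar>phase_diff s t\<bar> = 2 * s * (\<Sum>k. poisson_kernel t (\<xi> + real k))"
    using \<xi>(2) S s by simp
  also have "\<dots> \<le> 1 * (8 / 3 * pi\<^sup>2 * t)" using S s by (intro mult_mono) auto
  finally show ?thesis by simp
qed

lemma phase_diff_asymptotic:
  assumes t: "t \<ge> 1" and s: "0 < s" "s \<le> 1/2"
  shows "\<bar>phase_diff s t - (pi * s - s / (2 * t))\<bar> \<le> 8 * s / t\<^sup>2"
proof -
  define D where "D x = Im (ln_Gamma (Complex x t)) - (pi / 2 * x - (x - 1/2)\<^sup>2 / (2 * t))" for x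
  have "(D has_real_derivative (\<Sum>k. poisson_kernel t (x + real k)) - (pi / 2 - (x - 1/2) / t)) (at x)"
    for x
  proof -
    have poly: "((\<lambda>x. pi / 2 * x - (x - 1/2)\<^sup>2 / (2 * t)) has_real_derivative pi / 2 - (x - 1/2) / t) (at x)"
      using t by (auto intro!: derivative_eq_intros simp: field_simps)
    show ?thesis
      unfolding D_def using t by (intro DERIV_diff[OF has_real_derivative_Im_ln_Gamma poly]) simp
  qed
  then obtain \<xi> where \<xi>: "3/4 - s < \<xi>" "\<xi> < 3/4 + s" "D (3/4 + s) - D (3/4 - s)
      = (3/4 + s - (3/4 - s)) * ((\<Sum>k. poisson_kernel t (\<xi> + real k)) - (pi / 2 - (\<xi> - 1/2) / t))"
    using MVT2[of "3/4 - s" "3/4 + s" D] s by fastforce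
  have "D (3/4 + s) - D (3/4 - s) = phase_diff s t - (pi * s - s / (2 * t))"
    unfolding D_def phase_diff_def using t by (simp add: field_simps power2_eq_square)
  then have "phase_diff s t - (pi * s - s / (2 * t))
      = 2 * s * ((\<Sum>k. poisson_kernel t (\<xi> + real k)) - (pi / 2 - (\<xi> - 1/2) / t))"
    using \<xi>(3) by simp
  then have "\<bar>phase_diff s t - (pi * s - s / (2 * t))\<bar>
      = 2 * s * \<bar>(\<Sum>k. poisson_kernel t (\<xi> + real k)) - (pi / 2 - (\<xi> - 1/2) / t)\<bar>"
    using s by (simp add: abs_mult)
  also have "\<dots> \<le> 2 * s * (4 / t\<^sup>2)"
    using \<xi> s by (intro mult_left_mono poisson_kernel_series_linear_approx t) auto
  finally show ?thesis by simp
qed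

lemma Im_cis_mult_sin:
  "Im (cis (- \<alpha>) * sin (of_real pi * Complex a t))
     = (exp (pi * t) * cos (\<alpha> + pi * a) - exp (- (pi * t)) * cos (\<alpha> - pi * a)) / 2"
  by (simp add: Re_sin Im_sin cos_add cos_diff field_simps)

text \<open>By the reflection formula with \<open>z = 1/4 - s + i t\<close>, using
  \<open>\<Gamma>(1 - z) = cnj \<Gamma>(3/4 + s + i t)\<close>.\<close>

lemma A_fun_polar:
  assumes t: "t > 0"
  obtains R where "R > 0" and "A_fun (Complex (- 2 * t) (- 2 * s))
    = of_real R * (cis (- (pi / 4 + phase_diff s t)) * sin (of_real pi * Complex (1/4 - s) t))"
proof -
  define z where "z = Complex (1/4 - s) t"
  define w where "w = ln_Gamma (Complex (3/4 - s) t) + cnj (ln_Gamma (Complex (3/4 + s) t))"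
  have not_nonpos_Int: "Complex x t \<notin> \<int>\<^sub>\<le>\<^sub>0" for x
    using t nonpos_Ints_subset_nonpos_Reals by (auto simp: complex_nonpos_Reals_iff)
  have prod: "Gamma (Complex (3/4 - s) t) * Gamma (1 - z) = exp w"
  proof -
    have "1 - z = cnj (Complex (3/4 + s) t)" by (simp add: z_def complex_eq_iff)
    then have "Gamma (1 - z) = cnj (Gamma (Complex (3/4 + s) t))" by (simp add: cnj_Gamma)
    then show ?thesis
      using not_nonpos_Int by (simp add: w_def exp_add Gamma_complex_altdef exp_cnj)
  qed
  have refl: "Gamma z * Gamma (1 - z) = of_real pi / sin (of_real pi * z)"
    by (rule Gamma_reflection_complex)
  have "Gamma z \<noteq> 0" using not_nonpos_Int by (simp add: z_def Gamma_eq_zero_iff)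
  moreover have "Gamma (1 - z) \<noteq> 0" using prod by auto
  moreover from calculation have "sin (of_real pi * z) \<noteq> 0" using refl by auto
  ultimately have ratio: "Gamma (Complex (3/4 - s) t) / Gamma z = exp w * sin (of_real pi * z) / of_real pi"
    using prod refl by (simp add: field_simps) (metis mult.commute mult.left_commute)
  have "A_fun (Complex (- 2 * t) (- 2 * s)) = exp (- \<i> * of_real pi / 4) * of_real (sqrt 2)
      * (Gamma (Complex (3/4 - s) t) / Gamma z)"
  proof -
    have "3/4 - \<i> * Complex (- 2 * t) (- 2 * s) / 2 = Complex (3/4 - s) t"
      "1/4 - \<i> * Complex (- 2 * t) (- 2 * s) / 2 = z"
      by (simp_all add: z_def complex_eq_iff)
    then show ?thesis by (simp add: A_fun_def)
  qed
  also have "exp (- \<i> * of_real pi / 4) = cis (- (pi / 4))" by (simp add: cis_conv_exp)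
  also have "cis (- (pi / 4)) * of_real (sqrt 2) * (Gamma (Complex (3/4 - s) t) / Gamma z)
      = of_real (sqrt 2 * exp (Re w) / pi) * ((cis (- (pi / 4)) * cis (Im w)) * sin (of_real pi * z))"
    unfolding ratio exp_eq_polar[of w] by (simp add: field_simps)
  also have "cis (- (pi / 4)) * cis (Im w) = cis (- (pi / 4) + Im w)" by (rule cis_mult)
  also have "- (pi / 4) + Im w = - (pi / 4 + phase_diff s t)" by (simp add: w_def phase_diff_def)
  finally show thesis by (intro that[of "sqrt 2 * exp (Re w) / pi"]) (simp_all add: z_def)
qed

lemma real_pos_A_fun_imp_phase_equation:
  assumes t: "t > 0" and pos: "real_pos (A_fun (Complex (- 2 * t) (- 2 * s)))"
  shows "sin (pi * s - phase_diff s t) = exp (- 2 * pi * t) * cos (pi * s + phase_diff s t)"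
proof -
  define \<alpha> where "\<alpha> = pi / 4 + phase_diff s t"
  obtain R where "R > 0" and "A_fun (Complex (- 2 * t) (- 2 * s))
      = of_real R * (cis (- \<alpha>) * sin (of_real pi * Complex (1/4 - s) t))"
    using A_fun_polar[OF t] unfolding \<alpha>_def by blast
  then have "Im (cis (- \<alpha>) * sin (of_real pi * Complex (1/4 - s) t)) = 0"
    using pos by (simp add: real_pos_def)
  then have "exp (pi * t) * cos (\<alpha> + pi * (1/4 - s)) = exp (- (pi * t)) * cos (\<alpha> - pi * (1/4 - s))"
    unfolding Im_cis_mult_sin by simp
  moreover have "cos (\<alpha> + pi * (1/4 - s)) = sin (pi * s - phase_diff s t)"
    by (simp add: \<alpha>_def cos_sin_eq algebra_simps)
  moreover have "\<alpha> - pi * (1/4 - s) = pi * s + phase_diff s t" by (simp add: \<alpha>_def algebra_simps)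
  moreover have "exp (- (pi * t)) = exp (- 2 * pi * t) * exp (pi * t)" by (simp flip: exp_add)
  ultimately show ?thesis by simp
qed

section \<open>Solving the phase equation\<close>

lemma phase_equation_large_t_rough:
  fixes t s \<theta> :: real
  defines "E \<equiv> exp (- 2 * pi * t)"
  assumes t: "t \<ge> 32" and s: "0 < s" "s \<le> 1/2"
    and \<theta>: "\<bar>\<theta> - (pi * s - s / (2 * t))\<bar> \<le> 8 * s / t\<^sup>2"
    and eq: "sin (pi * s - \<theta>) = E * cos (pi * s + \<theta>)"
  shows "s \<le> 8 * t * E" and "0 < pi * s - \<theta>" and "pi * s - \<theta> \<le> 2 * E"
    and "\<bar>pi * s + \<theta>\<bar> \<le> 2 * pi * s" and "\<bar>s / (2 * t) - (pi * s - \<theta>)\<bar> \<le> 64 * E / t"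
proof -
  define \<delta> where "\<delta> = pi * s - \<theta>"
  have "8 * s * (4 * t) \<le> s * t\<^sup>2" using t s by (simp add: power2_eq_square mult_right_mono)
  then have "8 * s / t\<^sup>2 \<le> s / (4 * t)" using t by (simp add: divide_simps)
  then have lo: "s / (4 * t) \<le> \<delta>" and hi: "\<delta> \<le> 3 * s / (4 * t)"
    using \<theta> by (auto simp: \<delta>_def abs_le_iff field_simps)
  have "0 < s / (4 * t)" using s t by simp
  then show "0 < pi * s - \<theta>" using lo by (simp add: \<delta>_def)
  have "3 * s / (4 * t) \<le> s" using s t by (simp add: divide_simps)
  then have "\<delta> \<le> s" using hi by linarith
  also have "\<dots> \<le> 2 * pi * s" using s pi_gt3 by simp
  finally show "\<bar>pi * s + \<theta>\<bar> \<le> 2 * pi * s"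
    using \<open>0 < pi * s - \<theta>\<close> by (simp add: \<delta>_def abs_le_iff)
  have "\<delta> ^ 3 \<le> \<delta>"
    using \<open>\<delta> \<le> s\<close> s \<open>0 < pi * s - \<theta>\<close> by (simp add: \<delta>_def power_le_one power3_eq_cube mult_le_one)
  then have "\<delta> / 2 \<le> sin \<delta>" using abs_sin_minus_self_le[of \<delta>] \<open>0 < pi * s - \<theta>\<close>
    unfolding abs_le_iff \<delta>_def by simp
  also have "sin \<delta> \<le> E" using eq by (simp add: \<delta>_def E_def)
  finally show "pi * s - \<theta> \<le> 2 * E" by (simp add: \<delta>_def)
  then have "\<delta> * (4 * t) \<le> 2 * E * (4 * t)" using t by (intro mult_right_mono) (auto simp: \<delta>_def)
  moreover have "s \<le> \<delta> * (4 * t)" using lo t by (simp add: divide_simps)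
  ultimately show "s \<le> 8 * t * E" by (simp add: mult_ac)
  have "8 * s / t\<^sup>2 \<le> 8 * (8 * t * E) / t\<^sup>2" using \<open>s \<le> 8 * t * E\<close> by (intro divide_right_mono) (auto simp: mult_ac)
  then show "\<bar>s / (2 * t) - (pi * s - \<theta>)\<bar> \<le> 64 * E / t"
    using \<theta> t by (simp add: abs_minus_commute power2_eq_square)
qed

text \<open>With \<open>\<delta> = \<pi> s - \<theta> \<approx> s / (2 t)\<close> and \<open>E = exp (-2\<pi> t)\<close>, the equation reads
  \<open>sin \<delta> = E cos (\<pi> s + \<theta>) \<approx> E\<close>.\<close>

lemma phase_equation_large_t:
  fixes t s \<theta> :: real
  assumes t: "t \<ge> 32" and s: "0 < s" "s \<le> 1/2"
    and \<theta>: "\<bar>\<theta> - (pi * s - s / (2 * t))\<bar> \<le> 8 * s / t\<^sup>2"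
    and eq: "sin (pi * s - \<theta>) = exp (- 2 * pi * t) * cos (pi * s + \<theta>)"
  shows "\<bar>s / (2 * t * exp (- 2 * pi * t)) - 1\<bar> \<le> 3000 / t"
proof -
  define E where "E = exp (- 2 * pi * t)"
  define \<delta> where "\<delta> = pi * s - \<theta>"
  note rough = phase_equation_large_t_rough[OF assms, folded E_def \<delta>_def]
  have "E > 0" by (simp add: E_def)
  have "t\<^sup>2 * E \<le> 1" using square_mult_exp_neg_le t by (simp add: E_def)
  then have "E \<le> 1 / t\<^sup>2" using t by (simp add: divide_simps mult.commute)
  also have "\<dots> \<le> 1 / t" using t by (intro divide_left_mono) (auto simp: power2_eq_square)
  finally have "E \<le> 1 / t" .
  have "1 / t \<le> 1" using t by simp
  have "\<bar>\<delta> - sin \<delta>\<bar> \<le> 8 * E / t"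
  proof -
    have "\<bar>sin \<delta> - \<delta>\<bar> \<le> \<delta> ^ 3 / 6" using abs_sin_minus_self_le[of \<delta>] rough(2) by simp
    then have "\<bar>\<delta> - sin \<delta>\<bar> \<le> \<delta> ^ 3"
      unfolding abs_minus_commute[of \<delta>] using abs_ge_zero[of "sin \<delta> - \<delta>"] by linarith
    also have "\<dots> \<le> (2 * E) ^ 3" using rough(2,3) by (intro power_mono) auto
    also have "\<dots> = 8 * E * (E * E)" by (simp add: power3_eq_cube)
    also have "\<dots> \<le> 8 * E * (1 * (1 / t))"
      using \<open>E > 0\<close> \<open>E \<le> 1 / t\<close> \<open>1 / t \<le> 1\<close> by (intro mult_left_mono mult_mono) auto
    finally show ?thesis by simp
  qed
  moreover have "\<bar>E * (cos (pi * s + \<theta>) - 1)\<bar> \<le> 2048 * E / t"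
  proof -
    have "(pi * s + \<theta>)\<^sup>2 \<le> (2 * pi * s)\<^sup>2" using rough(4) by (metis abs_ge_zero power2_abs power_mono)
    then have "\<bar>cos (pi * s + \<theta>) - 1\<bar> \<le> 2 * pi\<^sup>2 * s\<^sup>2"
      using abs_cos_minus_one_le[of "pi * s + \<theta>"] by (simp add: power_mult_distrib)
    also have "\<dots> \<le> 2 * 4\<^sup>2 * (8 * t * E)\<^sup>2"
      using rough(1) s pi_less_4 by (intro mult_mono power_mono) auto
    also have "\<dots> = 2048 * (t\<^sup>2 * E) * E" by (simp add: power_mult_distrib power2_eq_square)
    also have "\<dots> \<le> 2048 * 1 * (1 / t)"
      using \<open>t\<^sup>2 * E \<le> 1\<close> \<open>E \<le> 1 / t\<close> \<open>E > 0\<close> by (intro mult_mono) auto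
    finally have "E * \<bar>cos (pi * s + \<theta>) - 1\<bar> \<le> E * (2048 / t)"
      using \<open>E > 0\<close> by (intro mult_left_mono) auto
    then show ?thesis using \<open>E > 0\<close> by (simp add: abs_mult mult_ac)
  qed
  moreover have "s / (2 * t) - E = (s / (2 * t) - \<delta>) + (\<delta> - sin \<delta>) + E * (cos (pi * s + \<theta>) - 1)"
    using eq by (simp add: E_def \<delta>_def algebra_simps)
  ultimately have "\<bar>s / (2 * t) - E\<bar> / E \<le> (3000 * E / t) / E"
    using rough(5) \<open>E > 0\<close> t by (intro divide_right_mono) (auto simp: \<delta>_def)
  moreover have "s / (2 * t * E) - 1 = (s / (2 * t) - E) / E" using \<open>E > 0\<close> t by (simp add: field_simps)
  ultimately show ?thesis using \<open>E > 0\<close> by (simp add: E_def)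
qed

lemma phase_equation_product_form:
  assumes "sin (pi * s - \<theta>) = E * cos (pi * s + \<theta>)"
  shows "2 * sin (pi / 4 + \<theta>) * sin (pi * (1/4 - s))
    = (1 - E) * cos (pi / 4 + \<theta> - pi * (1/4 - s))"
proof -
  define p q where "p = pi / 4 + \<theta>" and "q = pi * (1/4 - s)"
  have "pi * s - \<theta> = pi / 2 - (p + q)" and "pi * s + \<theta> = p - q"
    by (simp_all add: p_def q_def algebra_simps)
  then have "cos (p + q) = E * cos (p - q)" using assms by (simp add: sin_diff)
  then show ?thesis unfolding p_def [symmetric] q_def [symmetric]
    by (simp add: cos_add cos_diff algebra_simps)
qed

lemma phase_equation_small_t_rough:
  fixes t s \<theta> K :: real
  defines "p \<equiv> pi / 4 + \<theta>" and "q \<equiv> pi * (1/4 - s)"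
  assumes t: "0 < t" and K: "K * t \<le> 1/10" and s: "0 < s" "s < 1/2" and \<theta>: "\<bar>\<theta>\<bar> \<le> K * t"
    and eq: "sin (pi * s - \<theta>) = exp (- 2 * pi * t) * cos (pi * s + \<theta>)"
  shows "\<bar>sin q\<bar> \<le> 8 * t" and "\<bar>q\<bar> \<le> 16 * t"
    and "\<bar>sqrt 2 - 2 * sin p\<bar> \<le> 2 * K * t" and "\<bar>cos (p - q) - sqrt 2 / 2\<bar> \<le> (K + 16) * t"
proof -
  define D where "D = 1 - exp (- (2 * pi * t))"
  have D: "0 \<le> D" "D \<le> 8 * t" using one_minus_exp_neg_two_pi_bounds(1,2)[OF t] by (simp_all add: D_def)
  have sqrt2: "sqrt 2 - 2 * sin p = 2 * (sin (pi / 4) - sin p)" by (simp add: sin_45)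
  have "\<bar>sqrt 2 - 2 * sin p\<bar> = 2 * \<bar>sin (pi / 4) - sin p\<bar>" by (simp only: sqrt2 abs_mult)
  also have "\<dots> \<le> 2 * \<bar>\<theta>\<bar>" using abs_sin_diff_le[of "pi / 4" p] by (simp add: p_def)
  finally show "\<bar>sqrt 2 - 2 * sin p\<bar> \<le> 2 * K * t" using \<theta> by simp
  moreover have "7 / 5 \<le> sqrt 2" by (rule real_le_rsqrt) (simp add: power2_eq_square)
  ultimately have "1 \<le> 2 * sin p" using K \<theta> by (simp add: abs_le_iff)
  have "2 * sin p * sin q = D * cos (p - q)"
    using phase_equation_product_form[OF eq] by (simp add: p_def q_def D_def)
  then have "2 * sin p * \<bar>sin q\<bar> = D * \<bar>cos (p - q)\<bar>"
    using D \<open>1 \<le> 2 * sin p\<close> by (metis abs_mult abs_of_nonneg abs_of_pos zero_less_one order_less_le_trans)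
  also have "\<dots> \<le> D * 1" using D by (intro mult_left_mono) auto
  finally have "1 * \<bar>sin q\<bar> \<le> D"
    using \<open>1 \<le> 2 * sin p\<close> mult_right_mono[of 1 "2 * sin p" "\<bar>sin q\<bar>"] by simp
  then show sin_q: "\<bar>sin q\<bar> \<le> 8 * t" using D by simp
  have "\<bar>1/4 - s\<bar> \<le> 1/4" using s unfolding abs_le_iff by linarith
  then have "pi * \<bar>1/4 - s\<bar> \<le> 4 * (1/4)" using pi_less_4 by (intro mult_mono) auto
  then have "\<bar>q\<bar> \<le> 1" by (simp add: q_def abs_mult)
  then have "\<bar>q\<bar> ^ 3 \<le> \<bar>q\<bar>" using power_decreasing[of 1 3 "\<bar>q\<bar>"] by simp
  moreover have "\<bar>q\<bar> \<le> \<bar>sin q\<bar> + \<bar>q - sin q\<bar>" using abs_triangle_ineq[of "sin q" "q - sin q"] by simp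
  ultimately show q: "\<bar>q\<bar> \<le> 16 * t"
    using abs_sin_minus_self_le[of q] abs_minus_commute[of q "sin q"] sin_q t by linarith
  have "\<bar>cos (p - q) - sqrt 2 / 2\<bar> \<le> \<bar>p - q - pi / 4\<bar>"
    using abs_cos_diff_le[of "p - q" "pi / 4"] by (simp add: cos_45)
  also have "\<dots> \<le> \<bar>\<theta>\<bar> + \<bar>q\<bar>" by (simp add: p_def)
  finally show "\<bar>cos (p - q) - sqrt 2 / 2\<bar> \<le> (K + 16) * t" using \<theta> q by (simp add: algebra_simps)
qed

text \<open>Since \<open>2 sin p \<approx> sqrt 2\<close>, \<open>cos (p - q) \<approx> sqrt 2 / 2\<close> and \<open>D \<approx> 2 \<pi> t\<close>,
  the equation says \<open>sin q \<approx> \<pi> t\<close>.\<close>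

lemma phase_equation_small_t_linearized:
  fixes t K p q D :: real
  assumes t: "0 < t" "t \<le> 1" and K: "0 \<le> K"
    and eq: "2 * sin p * sin q = D * cos (p - q)"
    and D: "0 \<le> D" "D \<le> 8 * t" "\<bar>D - 2 * pi * t\<bar> \<le> 32 * t\<^sup>2"
    and q: "\<bar>sin q\<bar> \<le> 8 * t" "\<bar>q\<bar> \<le> 16 * t"
    and p: "\<bar>sqrt 2 - 2 * sin p\<bar> \<le> 2 * K * t" "\<bar>cos (p - q) - sqrt 2 / 2\<bar> \<le> (K + 16) * t"
  shows "\<bar>q - pi * t\<bar> \<le> (1526 + 24 * K) * t\<^sup>2"
proof -
  have tri: "\<bar>a + b + c + d\<bar> \<le> \<bar>a\<bar> + \<bar>b\<bar> + \<bar>c\<bar> + \<bar>d\<bar>" for a b c d :: real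
    using abs_triangle_ineq[of "a + b + c" d] abs_triangle_ineq[of "a + b" c] abs_triangle_ineq[of a b]
    by linarith
  have "sqrt 2 * (q - pi * t) = sqrt 2 * (q - sin q) + (sqrt 2 - 2 * sin p) * sin q
      + D * (cos (p - q) - sqrt 2 / 2) + sqrt 2 / 2 * (D - 2 * pi * t)"
    using eq by (simp add: algebra_simps)
  then have "\<bar>sqrt 2 * (q - pi * t)\<bar> \<le> \<bar>sqrt 2 * (q - sin q)\<bar> + \<bar>(sqrt 2 - 2 * sin p) * sin q\<bar>
      + \<bar>D * (cos (p - q) - sqrt 2 / 2)\<bar> + \<bar>sqrt 2 / 2 * (D - 2 * pi * t)\<bar>"
    by (simp only: tri)
  moreover have "\<bar>sqrt 2 * (q - sin q)\<bar> \<le> 1366 * t\<^sup>2"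
  proof -
    have "\<bar>sqrt 2 * (q - sin q)\<bar> = sqrt 2 * \<bar>sin q - q\<bar>" by (simp add: abs_mult abs_minus_commute)
    also have "\<dots> \<le> 2 * (\<bar>q\<bar> ^ 3 / 6)"
      using abs_sin_minus_self_le[of q] sqrt2_less_2 by (intro mult_mono) auto
    also have "\<dots> \<le> 2 * ((16 * t) ^ 3 / 6)"
      using q(2) by (intro mult_left_mono divide_right_mono power_mono) auto
    also have "\<dots> \<le> 4096 / 3 * t\<^sup>2 * 1" using t by (simp add: power3_eq_cube power2_eq_square)
    finally show ?thesis by simp
  qed
  moreover have "\<bar>(sqrt 2 - 2 * sin p) * sin q\<bar> \<le> 16 * K * t\<^sup>2"
    using mult_mono[OF p(1) q(1)] K t by (simp add: abs_mult power2_eq_square mult_ac)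
  moreover have "\<bar>D * (cos (p - q) - sqrt 2 / 2)\<bar> \<le> (8 * K + 128) * t\<^sup>2"
  proof -
    have "\<bar>D * (cos (p - q) - sqrt 2 / 2)\<bar> = D * \<bar>cos (p - q) - sqrt 2 / 2\<bar>" using D(1) by (simp add: abs_mult)
    also have "\<dots> \<le> (8 * t) * ((K + 16) * t)" using D p(2) K t by (intro mult_mono) auto
    finally show ?thesis by (simp add: power2_eq_square algebra_simps)
  qed
  moreover have "\<bar>sqrt 2 / 2 * (D - 2 * pi * t)\<bar> \<le> 32 * t\<^sup>2"
    using mult_mono[of "sqrt 2 / 2" 1 "\<bar>D - 2 * pi * t\<bar>" "32 * t\<^sup>2"] D(3) sqrt2_less_2
    by (simp add: abs_mult)
  ultimately have "\<bar>sqrt 2 * (q - pi * t)\<bar> \<le> (1526 + 24 * K) * t\<^sup>2" by (simp add: algebra_simps)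
  then have "sqrt 2 * \<bar>q - pi * t\<bar> \<le> (1526 + 24 * K) * t\<^sup>2" by (simp add: abs_mult)
  moreover have "1 * \<bar>q - pi * t\<bar> \<le> sqrt 2 * \<bar>q - pi * t\<bar>" by (intro mult_right_mono) auto
  ultimately show ?thesis by simp
qed

lemma phase_equation_small_t:
  fixes t s \<theta> K :: real
  assumes t: "0 < t" "t \<le> 1" and K: "0 \<le> K" "K * t \<le> 1/10" and s: "0 < s" "s < 1/2"
    and \<theta>: "\<bar>\<theta>\<bar> \<le> K * t"
    and eq: "sin (pi * s - \<theta>) = exp (- 2 * pi * t) * cos (pi * s + \<theta>)"
  shows "\<bar>2 * s - 1/2 + 2 * t\<bar> \<le> (1526 + 24 * K) * t\<^sup>2"
proof -
  have "2 * sin (pi / 4 + \<theta>) * sin (pi * (1/4 - s))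
      = (1 - exp (- (2 * pi * t))) * cos (pi / 4 + \<theta> - pi * (1/4 - s))"
    using phase_equation_product_form[OF eq] by simp
  then have "\<bar>pi * (1/4 - s) - pi * t\<bar> \<le> (1526 + 24 * K) * t\<^sup>2"
    using phase_equation_small_t_rough[OF t(1) K(2) s \<theta> eq] one_minus_exp_neg_two_pi_bounds[OF t(1)]
    by (intro phase_equation_small_t_linearized t K(1)) auto
  have "\<bar>2 * s - 1/2 + 2 * t\<bar> = 2 / pi * \<bar>pi * (1/4 - s) - pi * t\<bar>"
  proof -
    have lhs: "2 * s - 1/2 + 2 * t = - 2 * (1/4 - s - t)"
      and rhs: "pi * (1/4 - s) - pi * t = pi * (1/4 - s - t)"
      by (simp_all add: algebra_simps)
    show ?thesis unfolding lhs rhs abs_mult by simp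
  qed
  also have "\<dots> \<le> 2 / pi * ((1526 + 24 * K) * t\<^sup>2)"
    using \<open>\<bar>pi * (1/4 - s) - pi * t\<bar> \<le> _\<close> by (intro mult_left_mono) auto
  also have "\<dots> \<le> 1 * ((1526 + 24 * K) * t\<^sup>2)"
    using pi_ge_two K by (intro mult_right_mono) auto
  finally show ?thesis by simp
qed

lemma sigma_asymptotics_at_0:
  assumes h: "0 < h" "h < 1/64" and \<sigma>: "0 < \<sigma>" "\<sigma> < 1"
    and pos: "real_pos (A_fun (of_real (- 1 / h) - \<i> * of_real \<sigma>))"
  shows "\<bar>\<sigma> / (2 * exp (- pi / h) / h) - 1\<bar> \<le> 6000 * h"
proof -
  define t s where "t = 1 / (2 * h)" and "s = \<sigma> / 2"
  have t: "t \<ge> 32" using h by (simp add: t_def field_simps)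
  have s: "0 < s" "s \<le> 1/2" using \<sigma> by (simp_all add: s_def)
  have "of_real (- 1 / h) - \<i> * of_real \<sigma> = Complex (- 2 * t) (- 2 * s)"
    using h by (simp add: t_def s_def complex_eq_iff)
  then have "sin (pi * s - phase_diff s t) = exp (- 2 * pi * t) * cos (pi * s + phase_diff s t)"
    using pos h by (intro real_pos_A_fun_imp_phase_equation) (simp_all add: t_def)
  moreover have "\<bar>phase_diff s t - (pi * s - s / (2 * t))\<bar> \<le> 8 * s / t\<^sup>2"
    using t s by (intro phase_diff_asymptotic) auto
  ultimately have "\<bar>s / (2 * t * exp (- 2 * pi * t)) - 1\<bar> \<le> 3000 / t"
    using t s by (intro phase_equation_large_t) auto
  moreover have "\<sigma> / (2 * exp (- pi / h) / h) = s / (2 * t * exp (- 2 * pi * t))"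
    using h by (simp add: s_def t_def field_simps)
  ultimately show ?thesis using h by (simp add: t_def)
qed

lemma sigma_asymptotics_at_top:
  assumes h: "214 \<le> h" and \<sigma>: "0 < \<sigma>" "\<sigma> < 1"
    and pos: "real_pos (A_fun (of_real (- 1 / h) - \<i> * of_real \<sigma>))"
  shows "\<bar>\<sigma> - (1/2 - 1/h)\<bar> \<le> 640 / h\<^sup>2"
proof -
  define t s K where "t = 1 / (2 * h)" and "s = \<sigma> / 2" and "K = 8 / 3 * pi\<^sup>2"
  have "pi\<^sup>2 \<le> 4\<^sup>2" using pi_less_4 by (intro power_mono) auto
  then have K: "0 \<le> K" "K \<le> 128 / 3" by (simp_all add: K_def)
  have t: "0 < t" "t \<le> 1" "K * t \<le> 1/10" using h K by (simp_all add: t_def divide_simps)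
  have s: "0 < s" "s < 1/2" using \<sigma> by (simp_all add: s_def)
  have "of_real (- 1 / h) - \<i> * of_real \<sigma> = Complex (- 2 * t) (- 2 * s)"
    using h by (simp add: t_def s_def complex_eq_iff)
  then have "sin (pi * s - phase_diff s t) = exp (- 2 * pi * t) * cos (pi * s + phase_diff s t)"
    using pos h by (intro real_pos_A_fun_imp_phase_equation) (simp_all add: t_def)
  moreover have "\<bar>phase_diff s t\<bar> \<le> K * t" using abs_phase_diff_le[OF t(1)] s by (simp add: K_def)
  ultimately have "\<bar>2 * s - 1/2 + 2 * t\<bar> \<le> (1526 + 24 * K) * t\<^sup>2"
    using t K s by (intro phase_equation_small_t) auto
  also have "\<dots> \<le> 2560 * t\<^sup>2" using K by (intro mult_right_mono) auto
  finally show ?thesis using h by (simp add: s_def t_def power2_eq_square field_simps)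
qed

theorem theorem1p4:
  fixes \<sigma> :: "real \<Rightarrow> real"
  assumes sigma_range: "\<And>h. h > 0 \<Longrightarrow> 0 < \<sigma> h \<and> \<sigma> h < 1"
    and sigma_pos: "\<And>h. h > 0 \<Longrightarrow>
          real_pos (A_fun (complex_of_real (- 1 / h) - \<i> * complex_of_real (\<sigma> h)))"
    and sigma_unique: "\<And>h s. h > 0 \<Longrightarrow> 0 < s \<Longrightarrow> s < 1 \<Longrightarrow>
          real_pos (A_fun (complex_of_real (- 1 / h) - \<i> * complex_of_real s)) \<Longrightarrow> s = \<sigma> h"
  shows "(\<lambda>h. \<sigma> h / (2 * exp (- pi / h) / h) - 1) \<in> O[at_right 0](\<lambda>h. h)
    \<and> (\<lambda>h. \<sigma> h - (1/2 - 1/h)) \<in> O[at_top](\<lambda>h. 1 / h^2)"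
proof
  have "\<forall>\<^sub>F h in at_right 0. h \<in> {0<..<1/64::real}"
    using eventually_at_right_real[of 0 "1/64::real"] by simp
  then have "\<forall>\<^sub>F h in at_right 0. norm (\<sigma> h / (2 * exp (- pi / h) / h) - 1) \<le> 6000 * norm h"
    by eventually_elim (use sigma_range sigma_pos sigma_asymptotics_at_0 in auto)
  then show "(\<lambda>h. \<sigma> h / (2 * exp (- pi / h) / h) - 1) \<in> O[at_right 0](\<lambda>h. h)" by (rule bigoI)
next
  have "\<forall>\<^sub>F h in at_top. norm (\<sigma> h - (1/2 - 1/h)) \<le> 640 * norm (1 / h^2)"
    using eventually_ge_at_top[of "214::real"]
    by eventually_elim (use sigma_range sigma_pos sigma_asymptotics_at_top in auto)
  then show "(\<lambda>h. \<sigma> h - (1/2 - 1/h)) \<in> O[at_top](\<lambda>h. 1 / h^2)" by (rule bigoI)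
qed

end
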